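(* Let $\Omega_n=\dfrac{\pi^{n/2}}{\Gamma\left(\frac n2+1\right)}$ for $n\in\mathbb{N}_0$, and \[ c(n)=1+\frac1{4n}+\frac1{32n^2}-\frac5{128n^3}-\frac{21}{2048n^4}+\frac{399}{8192n^5},\qquad d(n)=c(n)+\frac{869}{65536n^6}. \] Then $\sqrt{\frac{n}{2\pi}}\,c(n)<\frac{\Omega_{n-1}}{\Omega_n}$ for every integer $n\ge12$, and $\frac{\Omega_{n-1}}{\Omega_n}<\sqrt{\frac n{2\pi}}\,d(n)$ for every integer $n\ge1$.
   Context: $\Omega_n$ is the volume of the unit ball in $\mathbb{R}^n$ ($\Omega_0=1$); $\Gamma$ is Euler's gamma function. *)

theory Defs
  imports "HOL-Analysis.Analysis"
begin

definition Omega :: "nat \<Rightarrow> real" where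
  "Omega n = pi powr (real n / 2) / Gamma (real n / 2 + 1)"

definition cc :: "nat \<Rightarrow> real" where
  "cc n = 1 + 1 / (4 * real n) + 1 / (32 * real n ^ 2) - 5 / (128 * real n ^ 3)
          - 21 / (2048 * real n ^ 4) + 399 / (8192 * real n ^ 5)"

definition dd :: "nat \<Rightarrow> real" where
  "dd n = cc n + 869 / (65536 * real n ^ 6)"

end

theory Submission
  imports Defs
begin

text \<open>
  Put W(x) = \<Gamma>(x+1)^2 / (x \<Gamma>(x+1/2)^2); then (\<Omega>(n-1) / \<Omega>(n))^2 = n/(2\<pi>) W(n/2).
  The functional equation of \<Gamma> gives W(x+1) = W(x) x(x+1)/(x+1/2)^2, and log-convexity
  of \<Gamma> gives 1 \<le> W(x) \<le> 1 + 1/(2x), so W(x) \<rightarrow> 1. If f \<rightarrow> 1 and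
  f(n)^2 n(n+2)/(n+1)^2 < f(n+2)^2, then W(n/2) / f(n)^2 decreases strictly along
  n, n+2, n+4, ... towards 1, whence f(n)^2 < W(n/2); the reversed step inequality gives
  an upper bound instead. For the two rational approximants used here the step inequalities
  reduce to polynomial inequalities whose difference has only positive coefficients when
  expanded in n - 1.
\<close>

lemma tendsto_divide_mult_power_at_top:
  assumes "j > 0"
  shows "((\<lambda>y::real. c / (k * y ^ j)) \<longlongrightarrow> 0) at_top"
proof -
  have "filterlim (\<lambda>y::real. y ^ j) at_infinity at_top"
    using filterlim_pow_at_top[OF assms filterlim_ident] by (rule filterlim_at_top_imp_at_infinity)
  then have "((\<lambda>y::real. (c / k) / y ^ j) \<longlongrightarrow> 0) at_top"
    by (rule tendsto_divide_0[OF tendsto_const])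
  then show ?thesis
    by simp
qed

lemma tendsto_divide_mult_at_top: "((\<lambda>y::real. c / (k * y)) \<longlongrightarrow> 0) at_top"
  using tendsto_divide_mult_power_at_top[of 1 c k] by simp

lemma limit_less_if_decreasing_by_steps:
  fixes Q :: "real \<Rightarrow> real"
  assumes "h > 0" and step: "\<And>z. z \<ge> a \<Longrightarrow> Q (z + h) < Q z"
    and lim: "(Q \<longlongrightarrow> L) at_top" and "y \<ge> a"
  shows "L < Q y"
proof -
  define s where "s k = Q (y + h * real k)" for k
  have s_dec: "s (Suc k) < s k" for k
  proof -
    have "a \<le> y + h * real k"
      using assms by (simp add: add_increasing2)
    then have "Q (y + h * real k + h) < Q (y + h * real k)"
      by (rule step)
    then show ?thesis
      by (simp add: s_def algebra_simps)
  qed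
  have "filterlim (\<lambda>k. y + h * real k) at_top sequentially"
    by (intro filterlim_tendsto_add_at_top[OF tendsto_const]
        filterlim_tendsto_pos_mult_at_top[OF tendsto_const \<open>h > 0\<close>] filterlim_real_sequentially)
  then have "s \<longlonglongrightarrow> L"
    unfolding s_def using lim by (rule filterlim_compose[rotated])
  then have "L \<le> s 1"
    using s_dec by (intro decseq_ge) (auto simp: decseq_Suc_iff less_imp_le)
  also have "\<dots> < Q y"
    using s_dec[of 0] by (simp add: s_def)
  finally show ?thesis .
qed

lemma Gamma_plus1_real_pos: "(x::real) > 0 \<Longrightarrow> Gamma (x + 1) = x * Gamma x"
  by (rule Gamma_plus1) (auto elim!: nonpos_Ints_cases)

lemma Gamma_midpoint_sq_le:
  fixes a b :: real
  assumes "a > 0" "b > 0"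
  shows "Gamma ((a + b) / 2) ^ 2 \<le> Gamma a * Gamma b"
proof -
  have "(ln \<circ> Gamma) ((1 - 1/2) *\<^sub>R a + (1/2) *\<^sub>R b)
          \<le> (1 - 1/2) * (ln \<circ> Gamma) a + (1/2) * (ln \<circ> Gamma) b"
    by (rule convex_onD[OF log_convex_Gamma_real]) (use assms in auto)
  then have "2 * ln (Gamma ((a + b) / 2)) \<le> ln (Gamma a) + ln (Gamma b)"
    by (simp add: scaleR_conv_of_real add_divide_distrib)
  then have "ln (Gamma ((a + b) / 2) ^ 2) \<le> ln (Gamma a * Gamma b)"
    using assms by (simp add: ln_realpow ln_mult_pos)
  moreover have "0 < Gamma ((a + b) / 2)"
    using assms by (intro Gamma_real_pos) simp
  moreover have "0 < Gamma a * Gamma b"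
    using assms by simp
  ultimately show ?thesis
    by simp
qed

definition gamma_half_ratio :: "real \<Rightarrow> real" where
  "gamma_half_ratio x = Gamma (x + 1) ^ 2 / (x * Gamma (x + 1/2) ^ 2)"

lemma gamma_half_ratio_plus1:
  assumes "x > 0"
  shows "gamma_half_ratio (x + 1) = gamma_half_ratio x * (x * (x + 1) / (x + 1/2) ^ 2)"
proof -
  define A B where "A = Gamma (x + 1)" and "B = Gamma (x + 1/2)"
  have "Gamma (x + 1 + 1) = (x + 1) * A"
    using assms unfolding A_def by (intro Gamma_plus1_real_pos) simp
  moreover have "Gamma (x + 1 + 1/2) = (x + 1/2) * B"
    using Gamma_plus1_real_pos[of "x + 1/2"] assms unfolding B_def by (simp add: add_ac)
  moreover have "A > 0" "B > 0"
    using assms by (auto simp: A_def B_def)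
  ultimately have "gamma_half_ratio (x + 1) = ((x + 1) * A) ^ 2 / ((x + 1) * ((x + 1/2) * B) ^ 2)"
    by (simp only: gamma_half_ratio_def)
  also have "\<dots> = A ^ 2 / (x * B ^ 2) * (x * (x + 1) / (x + 1/2) ^ 2)"
    using \<open>A > 0\<close> \<open>B > 0\<close> assms
    by (simp add: divide_simps) (simp add: algebra_simps power2_eq_square)
  also have "A ^ 2 / (x * B ^ 2) = gamma_half_ratio x"
    by (simp only: gamma_half_ratio_def A_def B_def)
  finally show ?thesis .
qed

lemma gamma_half_ratio_bounds:
  assumes "x > 0"
  shows "1 \<le> gamma_half_ratio x" "gamma_half_ratio x \<le> 1 + 1 / (2 * x)"
proof -
  define A B where "A = Gamma (x + 1)" and "B = Gamma (x + 1/2)"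
  have pos: "A > 0" "B > 0"
    using assms by (auto simp: A_def B_def)
  have mid: "(x + (x + 1)) / 2 = x + 1/2"
    by simp
  have "B ^ 2 \<le> Gamma x * A"
    using Gamma_midpoint_sq_le[of x "x + 1"] assms unfolding mid A_def B_def by simp
  then have "x * B ^ 2 \<le> A ^ 2"
    using Gamma_plus1_real_pos[OF assms] assms
    by (simp add: A_def power2_eq_square mult_left_mono mult.assoc)
  then show "1 \<le> gamma_half_ratio x"
    using pos assms unfolding gamma_half_ratio_def A_def[symmetric] B_def[symmetric]
    by (simp add: field_simps)
  have mid': "(x + 1/2 + (x + 1/2 + 1)) / 2 = x + 1"
    by simp
  have "A ^ 2 \<le> B * Gamma (x + 1/2 + 1)"
    using Gamma_midpoint_sq_le[of "x + 1/2" "x + 1/2 + 1"] assms unfolding mid' A_def B_def by simp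
  then have "A ^ 2 \<le> (x + 1/2) * B ^ 2"
    using Gamma_plus1_real_pos[of "x + 1/2"] assms by (simp add: B_def power2_eq_square mult_ac)
  then show "gamma_half_ratio x \<le> 1 + 1 / (2 * x)"
    using pos assms unfolding gamma_half_ratio_def A_def[symmetric] B_def[symmetric]
    by (simp add: field_simps)
qed

lemma gamma_half_ratio_pos: "x > 0 \<Longrightarrow> gamma_half_ratio x > 0"
  using gamma_half_ratio_bounds(1)[of x] by linarith

lemma tendsto_gamma_half_ratio: "(gamma_half_ratio \<longlongrightarrow> 1) at_top"
proof (rule tendsto_sandwich)
  show "\<forall>\<^sub>F x in at_top. 1 \<le> gamma_half_ratio x"
    "\<forall>\<^sub>F x in at_top. gamma_half_ratio x \<le> 1 + 1 / (2 * x)"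
    by (auto intro!: eventually_mono[OF eventually_gt_at_top[of 0]] gamma_half_ratio_bounds)
  show "((\<lambda>x::real. 1 + 1 / (2 * x)) \<longlongrightarrow> 1) at_top"
    using tendsto_add[OF tendsto_const tendsto_divide_mult_at_top, of 1 1 2] by simp
qed simp

lemma tendsto_gamma_half_ratio_half: "((\<lambda>z. gamma_half_ratio (z / 2)) \<longlongrightarrow> 1) at_top"
proof (rule filterlim_compose[OF tendsto_gamma_half_ratio])
  show "filterlim (\<lambda>z::real. z / 2) at_top at_top"
    using filterlim_tendsto_pos_mult_at_top[OF tendsto_const[of "1/2"] _ filterlim_ident] by simp
qed

lemma Omega_ratio_eq:
  assumes "n \<ge> 1"
  shows "Omega (n - 1) / Omega n = sqrt (real n / (2 * pi)) * sqrt (gamma_half_ratio (real n / 2))"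
proof -
  define x where "x = real n / 2"
  have x: "x > 0"
    using assms by (simp add: x_def)
  have half_pred: "real (n - 1) / 2 = x - 1/2"
    using assms by (simp add: x_def of_nat_diff field_simps)
  have "Omega (n - 1) = pi powr (x - 1/2) / Gamma (x + 1/2)"
    unfolding Omega_def half_pred by (simp add: add.commute)
  moreover have "Omega n = pi powr x / Gamma (x + 1)"
    by (simp add: Omega_def x_def)
  ultimately have "Omega (n - 1) / Omega n = pi powr (x - 1/2) * Gamma (x + 1) / (pi powr x * Gamma (x + 1/2))"
    by simp
  also have "\<dots> = Gamma (x + 1) / (sqrt pi * Gamma (x + 1/2))"
    by (simp add: powr_diff powr_half_sqrt)
  also have "\<dots> = sqrt ((Gamma (x + 1) / (sqrt pi * Gamma (x + 1/2))) ^ 2)"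
    using x by simp
  also have "\<dots> = sqrt (x / pi * gamma_half_ratio x)"
    using x by (simp add: gamma_half_ratio_def power_divide power_mult_distrib field_simps)
  also have "\<dots> = sqrt (real n / (2 * pi)) * sqrt (gamma_half_ratio x)"
    unfolding real_sqrt_mult[symmetric] by (simp add: x_def)
  finally show ?thesis
    by (simp add: x_def)
qed

lemma gamma_half_ratio_half_add2:
  assumes "z > 0"
  shows "gamma_half_ratio ((z + 2) / 2) = gamma_half_ratio (z / 2) * (z * (z + 2) / (z + 1) ^ 2)"
proof -
  have "gamma_half_ratio ((z + 2) / 2) = gamma_half_ratio (z / 2 + 1)"
    by (simp add: add_divide_distrib)
  also have "\<dots> = gamma_half_ratio (z / 2) * (z / 2 * (z / 2 + 1) / (z / 2 + 1/2) ^ 2)"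
    using assms by (intro gamma_half_ratio_plus1) simp
  also have "z / 2 * (z / 2 + 1) / (z / 2 + 1/2) ^ 2 = z * (z + 2) / (z + 1) ^ 2"
    using assms by (simp add: divide_simps power2_eq_square)
  finally show ?thesis .
qed

lemma sq_less_gamma_half_ratio:
  fixes f :: "real \<Rightarrow> real"
  assumes "a > 0" and pos: "\<And>z. z \<ge> a \<Longrightarrow> f z > 0"
    and step: "\<And>z. z \<ge> a \<Longrightarrow> f z ^ 2 * (z * (z + 2) / (z + 1) ^ 2) < f (z + 2) ^ 2"
    and lim: "(f \<longlongrightarrow> 1) at_top" and "y \<ge> a"
  shows "f y ^ 2 < gamma_half_ratio (y / 2)"
proof -
  define Q where "Q z = gamma_half_ratio (z / 2) / f z ^ 2" for z
  have Q_dec: "Q (z + 2) < Q z" if "z \<ge> a" for z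
  proof -
    define r where "r = z * (z + 2) / (z + 1) ^ 2"
    define g where "g = gamma_half_ratio (z / 2)"
    have "z > 0" "r > 0" "f z > 0" "g > 0"
      using that assms pos[OF that] gamma_half_ratio_pos[of "z / 2"] by (auto simp: r_def g_def)
    have "f z ^ 2 * r < f (z + 2) ^ 2"
      using step[OF that] by (simp add: r_def)
    moreover have "0 < f z ^ 2 * r"
      using \<open>r > 0\<close> \<open>f z > 0\<close> by simp
    moreover from calculation have "0 < f (z + 2) ^ 2"
      by linarith
    ultimately have "g * r / f (z + 2) ^ 2 < g * r / (f z ^ 2 * r)"
      using \<open>r > 0\<close> \<open>g > 0\<close> by (intro divide_strict_left_mono) auto
    moreover have "Q (z + 2) = g * r / f (z + 2) ^ 2"
      unfolding Q_def gamma_half_ratio_half_add2[OF \<open>z > 0\<close>] by (simp add: r_def g_def)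
    moreover have "g * r / (f z ^ 2 * r) = Q z"
      using \<open>r > 0\<close> by (simp add: Q_def g_def)
    ultimately show ?thesis
      by simp
  qed
  have Q_lim: "(Q \<longlongrightarrow> 1) at_top"
    unfolding Q_def using tendsto_gamma_half_ratio_half lim by (auto intro!: tendsto_eq_intros)
  have "1 < Q y"
    by (rule limit_less_if_decreasing_by_steps[OF _ Q_dec Q_lim \<open>y \<ge> a\<close>]) simp
  then show ?thesis
    using pos[OF \<open>y \<ge> a\<close>] by (simp add: Q_def less_divide_eq)
qed

lemma gamma_half_ratio_less_sq:
  fixes f :: "real \<Rightarrow> real"
  assumes "a > 0" and pos: "\<And>z. z \<ge> a \<Longrightarrow> f z > 0"
    and step: "\<And>z. z \<ge> a \<Longrightarrow> f (z + 2) ^ 2 < f z ^ 2 * (z * (z + 2) / (z + 1) ^ 2)"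
    and lim: "(f \<longlongrightarrow> 1) at_top" and "y \<ge> a"
  shows "gamma_half_ratio (y / 2) < f y ^ 2"
proof -
  define Q where "Q z = f z ^ 2 / gamma_half_ratio (z / 2)" for z
  have Q_dec: "Q (z + 2) < Q z" if "z \<ge> a" for z
  proof -
    define r where "r = z * (z + 2) / (z + 1) ^ 2"
    define g where "g = gamma_half_ratio (z / 2)"
    have "z > 0" "r > 0" "g > 0"
      using that assms gamma_half_ratio_pos[of "z / 2"] by (auto simp: r_def g_def)
    have "f (z + 2) ^ 2 < f z ^ 2 * r"
      using step[OF that] by (simp add: r_def)
    then have "f (z + 2) ^ 2 / (g * r) < f z ^ 2 * r / (g * r)"
      using \<open>r > 0\<close> \<open>g > 0\<close> by (intro divide_strict_right_mono) auto
    moreover have "Q (z + 2) = f (z + 2) ^ 2 / (g * r)"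
      unfolding Q_def gamma_half_ratio_half_add2[OF \<open>z > 0\<close>] by (simp add: r_def g_def)
    moreover have "f z ^ 2 * r / (g * r) = Q z"
      using \<open>r > 0\<close> by (simp add: Q_def g_def)
    ultimately show ?thesis
      by simp
  qed
  have Q_lim: "(Q \<longlongrightarrow> 1) at_top"
    unfolding Q_def using tendsto_gamma_half_ratio_half lim by (auto intro!: tendsto_eq_intros)
  have "1 < Q y"
    by (rule limit_less_if_decreasing_by_steps[OF _ Q_dec Q_lim \<open>y \<ge> a\<close>]) simp
  then show ?thesis
    using gamma_half_ratio_pos[of "y / 2"] assms by (simp add: Q_def less_divide_eq)
qed

text \<open>
  d(n) = upper_approx n, while lower_approx exceeds c(n) only for n \<ge> 12 but satisfies the
  step inequality for all n \<ge> 1.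
\<close>

definition upper_poly :: "real \<Rightarrow> real" where
  "upper_poly y = 65536 * y^6 + 16384 * y^5 + 2048 * y^4 - 2560 * y^3 - 672 * y^2
                  + 3192 * y + 869"

definition lower_poly :: "real \<Rightarrow> real" where
  "lower_poly y = y * upper_poly y - 10000"

definition upper_approx :: "real \<Rightarrow> real" where
  "upper_approx y = upper_poly y / (65536 * y^6)"

definition lower_approx :: "real \<Rightarrow> real" where
  "lower_approx y = lower_poly y / (65536 * y^7)"

lemma upper_approx_expand:
  assumes "y > 0"
  shows "upper_approx y = 1 + 1 / (4 * y) + 1 / (32 * y ^ 2) - 5 / (128 * y ^ 3)
           - 21 / (2048 * y ^ 4) + 399 / (8192 * y ^ 5) + 869 / (65536 * y ^ 6)"
  using assms unfolding upper_approx_def upper_poly_def by (simp add: field_simps) algebra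

lemma lower_approx_eq:
  assumes "y > 0"
  shows "lower_approx y = upper_approx y - 625 / (4096 * y ^ 7)"
  using assms unfolding lower_approx_def lower_poly_def upper_approx_def
  by (simp add: field_simps) algebra

lemma lower_poly_pos:
  assumes "y \<ge> 1"
  shows "lower_poly y > 0"
proof -
  define t where "t = y - 1"
  have "lower_poly y = 74797 + t * (562293 + t * (1628312 + t * (2631008 + t * (2547200
                         + t * (1476608 + t * (475136 + t * 65536))))))"
    unfolding lower_poly_def upper_poly_def t_def by algebra
  also have "\<dots> > 0"
    using assms by (intro add_pos_nonneg mult_nonneg_nonneg add_nonneg_nonneg) (auto simp: t_def)
  finally show ?thesis .
qed

lemma upper_poly_pos:
  assumes "y \<ge> 1"
  shows "upper_poly y > 0"
proof -
  define t where "t = y - 1"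
  have "upper_poly y = 84797 + t * (477496 + t * (1150816 + t * (1480192 + t * (1067008
                         + t * (409600 + t * 65536)))))"
    unfolding upper_poly_def t_def by algebra
  also have "\<dots> > 0"
    using assms by (intro add_pos_nonneg mult_nonneg_nonneg add_nonneg_nonneg) (auto simp: t_def)
  finally show ?thesis .
qed

lemma lower_poly_step_expansion:
  "(y + 1)^2 * lower_poly (y + 2) ^ 2 * y^13 - (y + 2)^15 * lower_poly y ^ 2
     = (let t = y - 1 in 16525188536255713 + t * (193494846462295723 + t * (1039185745681530877
          + t * (3442110963662590703 + t * (7917402044394254917 + t * (13458184840295248783
          + t * (17542039897876411417 + t * (17946033475144751859 + t * (14624053984964241499
          + t * (9576566716274360945 + t * (5060462800380732007 + t * (2157722261152275581
          + t * (739263510415049031 + t * (201715493993315509 + t * (43194804590330307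
          + t * (7097813526337889 + t * (865805720822008 + t * (74840493769440
          + t * (4365263201792 + t * (181209786368 + t * (7901560832
          + t * 309657600)))))))))))))))))))))"
  unfolding lower_poly_def upper_poly_def Let_def by algebra

lemma lower_poly_step:
  assumes "y \<ge> 1"
  shows "(y + 2)^15 * lower_poly y ^ 2 < (y + 1)^2 * lower_poly (y + 2) ^ 2 * y^13"
proof -
  have "0 < (y + 1)^2 * lower_poly (y + 2) ^ 2 * y^13 - (y + 2)^15 * lower_poly y ^ 2"
    unfolding lower_poly_step_expansion Let_def using assms
    by (intro add_pos_nonneg mult_nonneg_nonneg add_nonneg_nonneg) auto
  then show ?thesis
    by simp
qed

lemma upper_poly_step_expansion:
  "(y + 2)^13 * upper_poly y ^ 2 - (y + 1)^2 * upper_poly (y + 2) ^ 2 * y^11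
     = (let t = y - 1 in 706928947587143 + t * (7244631489179205 + t * (34567803912625673
          + t * (101735660365461499 + t * (206540515509371502 + t * (306710038772144178
          + t * (344840637865024178 + t * (299791227515571382 + t * (204027139793996499
          + t * (109335754638663897 + t * (46147363444372917 + t * (15258363330118367
          + t * (3905388459855368 + t * (757879895024928 + t * (107739528452608
          + t * (10577989081088 + t * (640760659968 + t * 18040422400)))))))))))))))))"
  unfolding upper_poly_def Let_def by algebra

lemma upper_poly_step:
  assumes "y \<ge> 1"
  shows "(y + 1)^2 * upper_poly (y + 2) ^ 2 * y^11 < (y + 2)^13 * upper_poly y ^ 2"
proof -
  have "0 < (y + 2)^13 * upper_poly y ^ 2 - (y + 1)^2 * upper_poly (y + 2) ^ 2 * y^11"
    unfolding upper_poly_step_expansion Let_def using assms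
    by (intro add_pos_nonneg mult_nonneg_nonneg add_nonneg_nonneg) auto
  then show ?thesis
    by simp
qed

lemma lower_approx_step:
  assumes "y \<ge> 1"
  shows "lower_approx y ^ 2 * (y * (y + 2) / (y + 1) ^ 2) < lower_approx (y + 2) ^ 2"
proof -
  define K where "K = 65536^2 * y^13 * (y + 1)^2 * (y + 2)^14"
  have "K > 0"
    using assms by (simp add: K_def)
  with lower_poly_step[OF assms]
  have "(y + 2)^15 * lower_poly y ^ 2 / K < (y + 1)^2 * lower_poly (y + 2) ^ 2 * y^13 / K"
    by (rule divide_strict_right_mono)
  moreover have "(y + 2)^15 * lower_poly y ^ 2 / K = lower_approx y ^ 2 * (y * (y + 2) / (y + 1) ^ 2)"
    unfolding K_def lower_approx_def using assms by (simp add: divide_simps; algebra)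
  moreover have "(y + 1)^2 * lower_poly (y + 2) ^ 2 * y^13 / K = lower_approx (y + 2) ^ 2"
    unfolding K_def lower_approx_def using assms by (simp add: divide_simps; algebra)
  ultimately show ?thesis
    by simp
qed

lemma upper_approx_step:
  assumes "y \<ge> 1"
  shows "upper_approx (y + 2) ^ 2 < upper_approx y ^ 2 * (y * (y + 2) / (y + 1) ^ 2)"
proof -
  define K where "K = 65536^2 * y^11 * (y + 1)^2 * (y + 2)^12"
  have "K > 0"
    using assms by (simp add: K_def)
  with upper_poly_step[OF assms]
  have "(y + 1)^2 * upper_poly (y + 2) ^ 2 * y^11 / K < (y + 2)^13 * upper_poly y ^ 2 / K"
    by (rule divide_strict_right_mono)
  moreover have "(y + 2)^13 * upper_poly y ^ 2 / K = upper_approx y ^ 2 * (y * (y + 2) / (y + 1) ^ 2)"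
    unfolding K_def upper_approx_def using assms by (simp add: divide_simps; algebra)
  moreover have "(y + 1)^2 * upper_poly (y + 2) ^ 2 * y^11 / K = upper_approx (y + 2) ^ 2"
    unfolding K_def upper_approx_def using assms by (simp add: divide_simps; algebra)
  ultimately show ?thesis
    by simp
qed

lemma lower_approx_pos: "y \<ge> 1 \<Longrightarrow> lower_approx y > 0"
  unfolding lower_approx_def using lower_poly_pos by simp

lemma upper_approx_pos: "y \<ge> 1 \<Longrightarrow> upper_approx y > 0"
  unfolding upper_approx_def using upper_poly_pos by simp

lemma tendsto_upper_approx: "(upper_approx \<longlongrightarrow> 1) at_top"
proof -
  have "\<forall>\<^sub>F y in at_top. upper_approx y = 1 + 1 / (4 * y) + 1 / (32 * y ^ 2)
           - 5 / (128 * y ^ 3) - 21 / (2048 * y ^ 4) + 399 / (8192 * y ^ 5) + 869 / (65536 * y ^ 6)"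
    by (intro eventually_mono[OF eventually_gt_at_top[of 0]] upper_approx_expand)
  moreover have "((\<lambda>y::real. 1 + 1 / (4 * y) + 1 / (32 * y ^ 2) - 5 / (128 * y ^ 3)
           - 21 / (2048 * y ^ 4) + 399 / (8192 * y ^ 5) + 869 / (65536 * y ^ 6))
           \<longlongrightarrow> 1 + 0 + 0 - 0 - 0 + 0 + 0) at_top"
    by (intro tendsto_add tendsto_diff tendsto_const tendsto_divide_mult_at_top
        tendsto_divide_mult_power_at_top) simp_all
  ultimately show ?thesis
    by (subst tendsto_cong) simp_all
qed

lemma tendsto_lower_approx: "(lower_approx \<longlongrightarrow> 1) at_top"
proof -
  have "\<forall>\<^sub>F y in at_top. lower_approx y = upper_approx y - 625 / (4096 * y ^ 7)"
    by (intro eventually_mono[OF eventually_gt_at_top[of 0]] lower_approx_eq)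
  moreover have "((\<lambda>y. upper_approx y - 625 / (4096 * y ^ 7)) \<longlongrightarrow> 1 - 0) at_top"
    by (intro tendsto_diff tendsto_upper_approx tendsto_divide_mult_power_at_top) simp
  ultimately show ?thesis
    by (subst tendsto_cong) simp_all
qed

lemma cc_less_lower_approx:
  assumes "n \<ge> 12"
  shows "cc n < lower_approx (real n)"
proof -
  have "real n ^ 6 * 10000 < real n ^ 6 * (869 * real n)"
    using assms by (intro mult_strict_left_mono) auto
  also have "\<dots> = real n ^ 7 * 869"
    by algebra
  finally have "625 / (4096 * real n ^ 7) < 869 / (65536 * real n ^ 6)"
    using assms by (simp add: field_simps)
  then show ?thesis
    using assms by (simp add: lower_approx_eq upper_approx_expand cc_def)
qed

lemma dd_eq_upper_approx: "n \<ge> 1 \<Longrightarrow> dd n = upper_approx (real n)"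
  by (simp add: dd_def cc_def upper_approx_expand)

lemma Omega_ratio_lower_bound:
  assumes "n \<ge> 12"
  shows "sqrt (real n / (2 * pi)) * cc n < Omega (n - 1) / Omega n"
proof -
  have "n \<ge> 1"
    using assms by simp
  have "lower_approx (real n) ^ 2 < gamma_half_ratio (real n / 2)"
    using assms
    by (intro sq_less_gamma_half_ratio[of 1] lower_approx_pos lower_approx_step tendsto_lower_approx)
      auto
  then have "cc n < sqrt (gamma_half_ratio (real n / 2))"
    using cc_less_lower_approx[OF assms] real_less_rsqrt by fastforce
  then show ?thesis
    unfolding Omega_ratio_eq[OF \<open>n \<ge> 1\<close>] using \<open>n \<ge> 1\<close> by (intro mult_strict_left_mono) auto
qed

lemma Omega_ratio_upper_bound:
  assumes "n \<ge> 1"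
  shows "Omega (n - 1) / Omega n < sqrt (real n / (2 * pi)) * dd n"
proof -
  have "gamma_half_ratio (real n / 2) < upper_approx (real n) ^ 2"
    using assms
    by (intro gamma_half_ratio_less_sq[of 1] upper_approx_pos upper_approx_step tendsto_upper_approx)
      auto
  then have "sqrt (gamma_half_ratio (real n / 2)) < dd n"
    using upper_approx_pos[of "real n"] assms by (simp add: dd_eq_upper_approx real_less_lsqrt)
  then show ?thesis
    unfolding Omega_ratio_eq[OF assms] using assms by (intro mult_strict_left_mono) auto
qed

theorem theorem9:
  shows "(\<forall>n::nat. n \<ge> 12 \<longrightarrow>
            sqrt (real n / (2 * pi)) * cc n < Omega (n - 1) / Omega n)
       \<and> (\<forall>n::nat. n \<ge> 1 \<longrightarrow>
            Omega (n - 1) / Omega n < sqrt (real n / (2 * pi)) * dd n)"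
  using Omega_ratio_lower_bound Omega_ratio_upper_bound by blast

end
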